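(* Let $\psi\in\mathcal W^-$, let $Y$ be a measurable space with finite measures $\mu_k$ ($k\in\mathbb N$) and $\mu$, and let $f_k,f$ be bounded functions on $Y$ that are $\mu_k$-measurable and $\mu$-measurable respectively. If $\int_Y\psi(cf_k)\,d\mu_k\to\int_Y\psi(cf)\,d\mu$ for every $c\in[0,\infty)$, then $\|f_k\|_{\psi,\mu_k}\to\|f\|_{\psi,\mu}$.
   Context: $\mathcal W^-$: functions $\psi:[-\infty,\infty]\to[0,\infty]$, even, continuous on $\mathbb R$, $\psi(0)=0$, $\psi(\pm\infty)=\infty$, smooth, concave, strictly increasing on $(0,\infty)$. For a finite measure $\nu$ and measurable $g$, the weak quasi-norm is $\|g\|_{\psi,\nu}=\inf\{N>0:\int_Y\psi(g/N)\,d\nu\le1\}$. *)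

theory Defs
  imports "HOL-Analysis.Analysis"
begin

definition smooth_on_real :: "real set \<Rightarrow> (real \<Rightarrow> real) \<Rightarrow> bool" where
  "smooth_on_real S f \<longleftrightarrow>
     (\<exists>D :: nat \<Rightarrow> real \<Rightarrow> real. D 0 = f \<and>
        (\<forall>n. \<forall>x\<in>S. (D n has_real_derivative D (Suc n) x) (at x)))"

text \<open>The class W^- (restricted to the real line; the convention
  psi(+-infinity) = infinity plays no role for real-valued arguments).\<close>
definition W_minus :: "(real \<Rightarrow> real) \<Rightarrow> bool" where
  "W_minus \<psi> \<longleftrightarrow>
     (\<forall>x. \<psi> x \<ge> 0) \<and>
     (\<forall>x. \<psi> (- x) = \<psi> x) \<and>
     continuous_on UNIV \<psi> \<and>
     \<psi> 0 = 0 \<and>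
     smooth_on_real {0<..} \<psi> \<and>
     concave_on {0<..} \<psi> \<and>
     strict_mono_on {0<..} \<psi>"

text \<open>Weak quasi-norm: inf {N > 0 . integral psi(g/N) d nu <= 1}, taken in the
  extended reals (inf of the empty set = infinity).\<close>
definition weak_qnorm :: "(real \<Rightarrow> real) \<Rightarrow> 'a measure \<Rightarrow> ('a \<Rightarrow> real) \<Rightarrow> ereal" where
  "weak_qnorm \<psi> \<nu> g =
     Inf {ereal N | N. N > 0 \<and> (\<integral>\<^sup>+ y. ennreal (\<psi> (g y / N)) \<partial>\<nu>) \<le> 1}"

end

theory Submission
  imports Defs
begin

text \<open>The modular \<open>c \<mapsto> \<integral> \<psi>(c g)\<close> is increasing in \<open>c \<ge> 0\<close>, strictly so unless it
  vanishes. Hence the quasi-norm is the gauge \<open>inf {N > 0. F(N) \<le> 1}\<close> of the antitone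
  function \<open>F(N) = \<integral> \<psi>(g/N)\<close>, which drops strictly below 1 right after any point where it
  is at most 1. For such gauges pointwise convergence \<open>F\<^sub>k \<rightarrow> F\<close> suffices: if \<open>N\<close> is
  below the limit gauge then \<open>F(N) > 1\<close>, so eventually \<open>F\<^sub>k(N) > 1\<close> and by monotonicity
  the \<open>k\<close>-th gauge is at least \<open>N\<close>; if \<open>N\<close> is above it then \<open>F(N) < 1\<close>, so eventually
  \<open>F\<^sub>k(N) < 1\<close> and the \<open>k\<close>-th gauge is at most \<open>N\<close>.\<close>

definition luxemburg_gauge :: "(real \<Rightarrow> real) \<Rightarrow> ereal" where
  "luxemburg_gauge F = Inf {ereal N | N. N > 0 \<and> F N \<le> 1}"

lemma luxemburg_gauge_nonneg: "0 \<le> luxemburg_gauge F"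
  unfolding luxemburg_gauge_def by (rule Inf_greatest) auto

lemma luxemburg_gauge_le: "0 < N \<Longrightarrow> F N \<le> 1 \<Longrightarrow> luxemburg_gauge F \<le> ereal N"
  unfolding luxemburg_gauge_def by (rule Inf_lower) auto

lemma le_luxemburg_gauge:
  assumes "\<And>M. 0 < M \<Longrightarrow> F M \<le> 1 \<Longrightarrow> N \<le> M"
  shows "ereal N \<le> luxemburg_gauge F"
  unfolding luxemburg_gauge_def using assms by (intro Inf_greatest) auto

lemma eventually_less_luxemburg_gauge:
  assumes lim: "\<And>N. 0 < N \<Longrightarrow> (\<lambda>k. Fk k N) \<longlonglongrightarrow> F N"
    and antimono: "\<And>k M N. 0 < M \<Longrightarrow> M \<le> N \<Longrightarrow> Fk k N \<le> Fk k M"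
    and a: "a < luxemburg_gauge F"
  shows "\<forall>\<^sub>F k in sequentially. a < luxemburg_gauge (Fk k)"
proof (cases "a < 0")
  case True
  then show ?thesis
    using luxemburg_gauge_nonneg by (metis always_eventually less_le_trans zero_ereal_def)
next
  case False
  then obtain N :: real where N: "a < ereal N" "ereal N < luxemburg_gauge F"
    using ereal_dense2[OF a] by blast
  with False have "0 < N" by (cases a) auto
  with N have "1 < F N" using luxemburg_gauge_le[of N F] by fastforce
  with lim[OF \<open>0 < N\<close>] have "\<forall>\<^sub>F k in sequentially. 1 < Fk k N"
    by (rule order_tendstoD(1))
  then show ?thesis
  proof eventually_elim
    case (elim k)
    have "N \<le> M" if "0 < M" "Fk k M \<le> 1" for M
      using antimono[OF that(1), of N k] elim that by fastforce
    then have "ereal N \<le> luxemburg_gauge (Fk k)"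
      by (rule le_luxemburg_gauge)
    with N show ?case by simp
  qed
qed

lemma eventually_luxemburg_gauge_less:
  assumes lim: "\<And>N. 0 < N \<Longrightarrow> (\<lambda>k. Fk k N) \<longlonglongrightarrow> F N"
    and drop: "\<And>M N. 0 < M \<Longrightarrow> M < N \<Longrightarrow> F M \<le> 1 \<Longrightarrow> F N < 1"
    and b: "luxemburg_gauge F < b"
  shows "\<forall>\<^sub>F k in sequentially. luxemburg_gauge (Fk k) < b"
proof -
  obtain M where M: "0 < M" "F M \<le> 1" "ereal M < b"
    using b unfolding luxemburg_gauge_def Inf_less_iff by blast
  then obtain N :: real where N: "ereal M < ereal N" "ereal N < b"
    using ereal_dense2 by blast
  from M N have "0 < N" "F N < 1"
    using drop[of M N] by simp_all
  then have "\<forall>\<^sub>F k in sequentially. Fk k N < 1"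
    using lim by (intro order_tendstoD(2)) auto
  then show ?thesis
  proof eventually_elim
    case (elim k)
    with M N have "luxemburg_gauge (Fk k) \<le> ereal N"
      by (intro luxemburg_gauge_le) auto
    with N show ?case by simp
  qed
qed

lemma tendsto_luxemburg_gauge:
  assumes "\<And>N. 0 < N \<Longrightarrow> (\<lambda>k. Fk k N) \<longlonglongrightarrow> F N"
    and "\<And>k M N. 0 < M \<Longrightarrow> M \<le> N \<Longrightarrow> Fk k N \<le> Fk k M"
    and "\<And>M N. 0 < M \<Longrightarrow> M < N \<Longrightarrow> F M \<le> 1 \<Longrightarrow> F N < 1"
  shows "(\<lambda>k. luxemburg_gauge (Fk k)) \<longlonglongrightarrow> luxemburg_gauge F"
  using eventually_less_luxemburg_gauge[OF assms(1,2)] eventually_luxemburg_gauge_less[OF assms(1,3)]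
  by (rule order_tendstoI)

lemma W_minus_nonneg: "W_minus \<psi> \<Longrightarrow> 0 \<le> \<psi> x"
  and W_minus_zero: "W_minus \<psi> \<Longrightarrow> \<psi> 0 = 0"
  and W_minus_continuous: "W_minus \<psi> \<Longrightarrow> continuous_on UNIV \<psi>"
  unfolding W_minus_def by auto

lemma W_minus_abs: "W_minus \<psi> \<Longrightarrow> \<psi> \<bar>x\<bar> = \<psi> x"
  unfolding W_minus_def by (cases "0 \<le> x") auto

lemma W_minus_strict_mono:
  assumes psi: "W_minus \<psi>" and "0 \<le> x" "x < y"
  shows "\<psi> x < \<psi> y"
proof -
  have mono: "strict_mono_on {0<..} \<psi>"
    using psi unfolding W_minus_def by auto
  show ?thesis
  proof (cases "x = 0")
    case True
    have "\<psi> (y / 2) < \<psi> y"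
      using assms by (intro strict_mono_onD[OF mono]) auto
    with True show ?thesis
      using W_minus_zero[OF psi] W_minus_nonneg[OF psi, of "y / 2"] by simp
  next
    case False
    with assms show ?thesis by (intro strict_mono_onD[OF mono]) auto
  qed
qed

lemma W_minus_mono: "W_minus \<psi> \<Longrightarrow> 0 \<le> x \<Longrightarrow> x \<le> y \<Longrightarrow> \<psi> x \<le> \<psi> y"
  using W_minus_strict_mono[of \<psi> x y] by (cases "x = y") auto

lemma W_minus_strict_mono_scale:
  assumes psi: "W_minus \<psi>" and cd: "0 \<le> c" "c < d" and "t \<noteq> 0"
  shows "\<psi> (c * t) < \<psi> (d * t)"
proof -
  have "\<psi> (c * t) = \<psi> (c * \<bar>t\<bar>)"
    using W_minus_abs[OF psi, of "c * t"] cd by (simp add: abs_mult)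
  also have "\<dots> < \<psi> (d * \<bar>t\<bar>)"
    using cd \<open>t \<noteq> 0\<close> by (intro W_minus_strict_mono[OF psi]) (auto simp: mult_strict_right_mono)
  also have "\<dots> = \<psi> (d * t)"
    using W_minus_abs[OF psi, of "d * t"] cd by (simp add: abs_mult)
  finally show ?thesis .
qed

lemma W_minus_mono_scale:
  "W_minus \<psi> \<Longrightarrow> 0 \<le> c \<Longrightarrow> c \<le> d \<Longrightarrow> \<psi> (c * t) \<le> \<psi> (d * t)"
  using W_minus_strict_mono_scale[of \<psi> c d t] W_minus_zero[of \<psi>]
  by (cases "c = d \<or> t = 0") auto

definition modular :: "(real \<Rightarrow> real) \<Rightarrow> 'a measure \<Rightarrow> ('a \<Rightarrow> real) \<Rightarrow> real \<Rightarrow> real" where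
  "modular \<psi> M g c = (\<integral>y. \<psi> (c * g y) \<partial>M)"

lemma integrable_W_minus_scale:
  assumes psi: "W_minus \<psi>" and "finite_measure M" and g: "g \<in> borel_measurable M"
    and "bounded (range g)"
  shows "integrable M (\<lambda>y. \<psi> (c * g y))"
proof -
  interpret finite_measure M by fact
  obtain B where B: "\<And>y. \<bar>g y\<bar> \<le> B"
    using \<open>bounded (range g)\<close> unfolding bounded_real by auto
  have "\<psi> (c * g y) \<le> \<psi> (\<bar>c\<bar> * B)" for y
  proof -
    have "\<psi> (c * g y) = \<psi> \<bar>c * g y\<bar>"
      by (simp add: W_minus_abs[OF psi])
    also have "\<dots> \<le> \<psi> (\<bar>c\<bar> * B)"
      using B[of y] by (intro W_minus_mono[OF psi]) (auto simp: abs_mult mult_left_mono)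
    finally show ?thesis .
  qed
  moreover have "(\<lambda>y. \<psi> (c * g y)) \<in> borel_measurable M"
    using borel_measurable_continuous_onI[OF W_minus_continuous[OF psi]] g by measurable
  ultimately show ?thesis
    using W_minus_nonneg[OF psi] by (intro integrable_const_bound[where B="\<psi> (\<bar>c\<bar> * B)"]) auto
qed

lemma modular_mono:
  assumes psi: "W_minus \<psi>" and "finite_measure M" "g \<in> borel_measurable M" "bounded (range g)"
    and "0 \<le> c" "c \<le> d"
  shows "modular \<psi> M g c \<le> modular \<psi> M g d"
  unfolding modular_def using assms integrable_W_minus_scale[OF assms(1-4)]
  by (intro integral_mono W_minus_mono_scale) auto

lemma modular_strict_mono:
  assumes psi: "W_minus \<psi>" and "finite_measure M" and g: "g \<in> borel_measurable M"
    and "bounded (range g)" and cd: "0 \<le> c" "c < d" and nonzero: "modular \<psi> M g d \<noteq> 0"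
  shows "modular \<psi> M g c < modular \<psi> M g d"
proof -
  interpret finite_measure M by fact
  let ?A = "{y \<in> space M. g y \<noteq> 0}"
  have A: "?A \<in> sets M" using g by measurable
  have "emeasure M ?A \<noteq> 0"
  proof
    assume "emeasure M ?A = 0"
    then have "AE y in M. g y = 0"
      using A by (intro AE_I[of _ _ ?A]) auto
    then have "AE y in M. \<psi> (d * g y) = 0"
      by eventually_elim (simp add: W_minus_zero[OF psi])
    then have "modular \<psi> M g d = 0"
      unfolding modular_def using integral_cong_AE[of "\<lambda>y. \<psi> (d * g y)" M "\<lambda>_. 0"] g
      using borel_measurable_integrable[OF integrable_W_minus_scale[OF assms(1-4)]] by simp
    with nonzero show False ..
  qed
  then show ?thesis
    unfolding modular_def using integrable_W_minus_scale[OF assms(1-4)] cd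
    by (intro integral_less_AE[OF _ _ _ A])
      (auto intro!: AE_I2 W_minus_mono_scale[OF psi] dest: W_minus_strict_mono_scale[OF psi])
qed

lemma modular_inverse_less_one:
  assumes psi: "W_minus \<psi>" and "finite_measure M" "g \<in> borel_measurable M" "bounded (range g)"
    and MN: "0 < a" "a < b" and le: "modular \<psi> M g (1 / a) \<le> 1"
  shows "modular \<psi> M g (1 / b) < 1"
proof (cases "modular \<psi> M g (1 / a) = 0")
  case True
  have "modular \<psi> M g (1 / b) \<le> modular \<psi> M g (1 / a)"
    using MN by (intro modular_mono[OF assms(1-4)]) (auto intro: divide_left_mono)
  with True show ?thesis by simp
next
  case False
  have "1 / b < 1 / a"
    using MN by (simp add: frac_less2)
  then have "modular \<psi> M g (1 / b) < modular \<psi> M g (1 / a)"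
    using MN False by (intro modular_strict_mono[OF assms(1-4)]) simp_all
  with le show ?thesis by simp
qed

lemma weak_qnorm_eq_luxemburg_gauge:
  assumes psi: "W_minus \<psi>" and "finite_measure M" "g \<in> borel_measurable M" "bounded (range g)"
  shows "weak_qnorm \<psi> M g = luxemburg_gauge (\<lambda>N. modular \<psi> M g (1 / N))"
proof -
  have "(\<integral>\<^sup>+ y. ennreal (\<psi> (g y / N)) \<partial>M) = ennreal (modular \<psi> M g (1 / N))" for N
    unfolding modular_def using integrable_W_minus_scale[OF assms, of "1 / N"] W_minus_nonneg[OF psi]
    by (subst nn_integral_eq_integral[symmetric]) auto
  then show ?thesis
    unfolding weak_qnorm_def luxemburg_gauge_def by (simp add: ennreal_le_1)
qed

theorem lemma2p7:
  fixes \<psi> :: "real \<Rightarrow> real"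
    and \<mu>k :: "nat \<Rightarrow> 'a measure" and \<mu> :: "'a measure"
    and fk :: "nat \<Rightarrow> 'a \<Rightarrow> real" and f :: "'a \<Rightarrow> real"
  assumes psi: "W_minus \<psi>"
    and sets_eq: "\<And>k. sets (\<mu>k k) = sets \<mu>"
    and fin_k: "\<And>k. finite_measure (\<mu>k k)"
    and fin: "finite_measure \<mu>"
    and meas_k: "\<And>k. fk k \<in> borel_measurable (\<mu>k k)"
    and meas: "f \<in> borel_measurable \<mu>"
    and bdd_k: "\<And>k. bounded (range (fk k))"
    and bdd: "bounded (range f)"
    and conv: "\<And>c::real. c \<ge> 0 \<Longrightarrow>
       (\<lambda>k. \<integral>y. \<psi> (c * fk k y) \<partial>(\<mu>k k)) \<longlonglongrightarrow> (\<integral>y. \<psi> (c * f y) \<partial>\<mu>)"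
  shows "(\<lambda>k. weak_qnorm \<psi> (\<mu>k k) (fk k)) \<longlonglongrightarrow> weak_qnorm \<psi> \<mu> f"
  unfolding weak_qnorm_eq_luxemburg_gauge[OF psi fin meas bdd]
    weak_qnorm_eq_luxemburg_gauge[OF psi fin_k meas_k bdd_k]
proof (rule tendsto_luxemburg_gauge)
  fix N :: real assume "0 < N"
  then show "(\<lambda>k. modular \<psi> (\<mu>k k) (fk k) (1 / N)) \<longlonglongrightarrow> modular \<psi> \<mu> f (1 / N)"
    unfolding modular_def by (intro conv) simp
next
  fix k and M N :: real assume "0 < M" "M \<le> N"
  then show "modular \<psi> (\<mu>k k) (fk k) (1 / N) \<le> modular \<psi> (\<mu>k k) (fk k) (1 / M)"
    by (intro modular_mono[OF psi fin_k meas_k bdd_k]) (auto intro: divide_left_mono)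
next
  fix M N :: real assume "0 < M" "M < N" "modular \<psi> \<mu> f (1 / M) \<le> 1"
  then show "modular \<psi> \<mu> f (1 / N) < 1"
    by (rule modular_inverse_less_one[OF psi fin meas bdd])
qed

end
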